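(* Let $L$ be a bounded lattice and $A:L^2\to L$ a uninorm with neutral element $a\in L$. A function $F:L^2\to L$ is $A$-migrative if and only if there exists a function $f:L\to L$ such that $F(x,y)=f(A(x,y))$ for all $x,y\in L$.
   Context: A uninorm on $L$ is a map $A:L^2\to L$ that is commutative, associative, non-decreasing in each argument and has a neutral element $a\in L$ ($A(a,x)=x$ for all $x$). For $\alpha\in L$, $F:L^2\to L$ is $(\alpha,A)$-migrative if $F(A(\alpha,x),y)=F(x,A(\alpha,y))$ for all $x,y\in L$; $F$ is $A$-migrative if it is $(\alpha,A)$-migrative for every $\alpha\in L$. *)

theory Defs
  imports Main
begin

definition uninorm :: "('a::bounded_lattice \<Rightarrow> 'a \<Rightarrow> 'a) \<Rightarrow> 'a \<Rightarrow> bool" where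
  "uninorm A a \<longleftrightarrow>
     (\<forall>x y. A x y = A y x) \<and>
     (\<forall>x y z. A (A x y) z = A x (A y z)) \<and>
     (\<forall>x y z. x \<le> y \<longrightarrow> A x z \<le> A y z) \<and>
     (\<forall>x y z. x \<le> y \<longrightarrow> A z x \<le> A z y) \<and>
     (\<forall>x. A a x = x)"

definition alpha_migrative :: "'a \<Rightarrow> ('a \<Rightarrow> 'a \<Rightarrow> 'a) \<Rightarrow> ('a \<Rightarrow> 'a \<Rightarrow> 'a) \<Rightarrow> bool" where
  "alpha_migrative \<alpha> A F \<longleftrightarrow> (\<forall>x y. F (A \<alpha> x) y = F x (A \<alpha> y))"

definition migrative :: "('a \<Rightarrow> 'a \<Rightarrow> 'a) \<Rightarrow> ('a \<Rightarrow> 'a \<Rightarrow> 'a) \<Rightarrow> bool" where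
  "migrative A F \<longleftrightarrow> (\<forall>\<alpha>. alpha_migrative \<alpha> A F)"

end

theory Submission
  imports Defs
begin

text \<open>Only the commutative monoid structure of a uninorm matters. If F is A-migrative, then
  taking \<alpha> = x and moving x across at the neutral element gives F x y = F a (A x y), so
  f = F a works. Conversely, F x y = f (A x y) is migrative because
  A (A \<alpha> x) y = A x (A \<alpha> y) by associativity and commutativity.\<close>

lemma uninorm_imp_comm_monoid:
  assumes "uninorm A a"
  shows "comm_monoid A a"
  using assms unfolding uninorm_def by unfold_locales auto

lemma (in comm_monoid) migrative_imp_factors_through:
  assumes "migrative f F"
  shows "F x y = F \<^bold>1 (x \<^bold>* y)"
proof -
  have "F (x \<^bold>* \<^bold>1) y = F \<^bold>1 (x \<^bold>* y)"
    using assms unfolding migrative_def alpha_migrative_def by blast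
  then show ?thesis by simp
qed

lemma (in abel_semigroup) factors_through_imp_migrative:
  assumes "\<And>x y. F x y = g (x \<^bold>* y)"
  shows "migrative f F"
  unfolding migrative_def alpha_migrative_def assms by (simp add: ac_simps)

theorem mainTheorem6:
  fixes A F :: "'a::bounded_lattice \<Rightarrow> 'a \<Rightarrow> 'a" and a :: 'a
  assumes "uninorm A a"
  shows "migrative A F \<longleftrightarrow> (\<exists>f :: 'a \<Rightarrow> 'a. \<forall>x y. F x y = f (A x y))"
proof
  interpret comm_monoid A a
    using assms by (rule uninorm_imp_comm_monoid)
  show "migrative A F \<Longrightarrow> \<exists>f. \<forall>x y. F x y = f (A x y)"
    using migrative_imp_factors_through by blast
  show "\<exists>f. \<forall>x y. F x y = f (A x y) \<Longrightarrow> migrative A F"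
    using factors_through_imp_migrative by blast
qed

end
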